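(* Let $X_1,\dots,X_n$ be random variables with values in $[0,b]$ such that $|\mathbb{E}[X_t\mid X_1,\dots,X_{t-1}]-\mu|\le C$ for all $t$, where $C$ is a constant with $0<C<\mu$. Let $S_n=X_1+\cdots+X_n$. Then for all $a\ge0$, $$\Pr\{S_n\ge n(\mu+C)+a\}\le \exp\!\Big(-2\Big(\tfrac{a(\mu-C)}{b(\mu+C)}\Big)^2/n\Big)$$ and $$\Pr\{S_n\le n(\mu-C)-a\}\le \exp\!\big(-2(a/b)^2/n\big).$$ *)

theory Defs
  imports "HOL-Probability.Probability"
begin

definition past_algebra :: "'a measure \<Rightarrow> (nat \<Rightarrow> 'a \<Rightarrow> real) \<Rightarrow> nat \<Rightarrow> 'a measure" where
  "past_algebra M X t =
     sigma (space M) {X i -` A \<inter> space M | i A. i \<in> {1..<t} \<and> A \<in> sets borel}"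

end

theory Submission
  imports Defs "HOL-Probability.Hoeffding"
begin

text \<open>
  This is the Azuma--Hoeffding argument with conditional means in place of a martingale.
  Convexity bounds \<open>exp (l X\<^sub>t)\<close> by the chord through \<open>0\<close> and \<open>b\<close>, which is affine in \<open>X\<^sub>t\<close>;
  conditioning on the past therefore only sees \<open>E[X\<^sub>t | X\<^sub>1, \<dots>, X\<^sub>t\<^sub>-\<^sub>1]\<close>, and a one-sided bound
  \<open>m\<close> on it together with Hoeffding's lemma gives the factor \<open>exp (l m + (l b)\<^sup>2 / 8)\<close>.
  Peeling off the last summand inductively bounds the moment generating function of \<open>S\<^sub>n\<close>,
  and Chernoff's inequality with the optimal \<open>l = \<plusminus>4 a / (n b\<^sup>2)\<close> yields the tails
  \<open>exp (-2 (a/b)\<^sup>2 / n)\<close> around \<open>n m\<close>. Taking \<open>m = \<mu> + C\<close> resp. \<open>m = \<mu> - C\<close> gives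
  the theorem, the first bound even without the factor \<open>(\<mu> - C) / (\<mu> + C)\<close>.
\<close>

lemma space_past_algebra [simp]: "space (past_algebra M X t) = space M"
  unfolding past_algebra_def by (simp add: space_measure_of_conv)

lemma sets_past_algebra:
  "sets (past_algebra M X t) =
     sigma_sets (space M) {X i -` A \<inter> space M | i A. i \<in> {1..<t} \<and> A \<in> sets borel}"
  unfolding past_algebra_def by (rule sets_measure_of) auto

lemma subalgebra_past_algebra:
  assumes "\<And>i. i \<in> {1..<t} \<Longrightarrow> X i \<in> borel_measurable M"
  shows "subalgebra M (past_algebra M X t)"
  unfolding subalgebra_def sets_past_algebra
  using assms by (auto intro!: sets.sigma_sets_subset simp: measurable_sets)

lemma measurable_past_algebra:
  assumes "i \<in> {1..<t}"
  shows "X i \<in> borel_measurable (past_algebra M X t)"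
proof (rule measurableI)
  fix A :: "real set" assume "A \<in> sets borel"
  then show "X i -` A \<inter> space (past_algebra M X t) \<in> sets (past_algebra M X t)"
    unfolding space_past_algebra sets_past_algebra using assms by (intro sigma_sets.Basic) blast
qed auto

lemma (in finite_measure) finite_measure_subalgebra_past_algebra:
  assumes "\<And>i. i \<in> {1..<t} \<Longrightarrow> X i \<in> borel_measurable M"
  shows "finite_measure_subalgebra M (past_algebra M X t)"
  using subalgebra_past_algebra[OF assms] finite_measure_axioms
  by (simp add: finite_measure_subalgebra_def finite_measure_subalgebra_axioms_def)

lemma Hoeffdings_lemma_two_point:
  fixes h p :: real
  assumes "0 \<le> p" "p \<le> 1"
  shows "1 + p * (exp h - 1) \<le> exp (h * p + h\<^sup>2 / 8)"
proof -
  have nonneg_case: "1 + q * (exp g - 1) \<le> exp (g * q + g\<^sup>2 / 8)" if "g \<ge> 0" "q \<ge> 0" for g q :: real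
  proof -
    have "0 < 1 + q * (exp g - 1)"
      using that by (intro add_pos_nonneg mult_nonneg_nonneg) auto
    moreover have "ln (1 + q * (exp g - 1)) \<le> g * q + g\<^sup>2 / 8"
      using Hoeffdings_lemma_aux[OF that] by simp
    ultimately show ?thesis
      by (metis exp_le_cancel_iff exp_ln)
  qed
  show ?thesis
  proof (cases "h \<ge> 0")
    case True
    then show ?thesis using nonneg_case assms by blast
  next
    case False
    \<comment> \<open>Pass to the complementary point \<open>1 - p\<close> and the exponent \<open>-h\<close>.\<close>
    have "1 + p * (exp h - 1) = exp h * (1 + (1 - p) * (exp (-h) - 1))"
      by (simp add: algebra_simps exp_minus)
    also have "\<dots> \<le> exp h * exp (-h * (1 - p) + h\<^sup>2 / 8)"
      using nonneg_case[of "-h" "1 - p"] False assms by simp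
    also have "\<dots> = exp (h * p + h\<^sup>2 / 8)"
      by (simp add: exp_add[symmetric] algebra_simps)
    finally show ?thesis .
  qed
qed

lemma exp_le_chord:
  fixes l b y :: real
  assumes "b > 0" "0 \<le> y" "y \<le> b"
  shows "exp (l * y) \<le> 1 + y * (exp (l * b) - 1) / b"
proof -
  define u where "u = y / b"
  have u: "0 \<le> u" "u \<le> 1"
    using assms by (auto simp: u_def)
  have "exp (l * y) = exp ((1 - u) * 0 + u * (l * b))"
    using assms by (simp add: u_def)
  also have "\<dots> \<le> (1 - u) * exp 0 + u * exp (l * b)"
    using convex_onD[OF convex_on_exp[of 1], of u 0 "l * b"] u by simp
  also have "\<dots> = 1 + y * (exp (l * b) - 1) / b"
    using assms by (simp add: u_def field_simps)
  finally show ?thesis .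
qed

lemma exp_minus_one_mult_mono:
  fixes l b x m :: real
  assumes "l * x \<le> l * m" "b > 0"
  shows "(exp (l * b) - 1) * x \<le> (exp (l * b) - 1) * m"
proof (cases l "0 :: real" rule: linorder_cases)
  case less
  then show ?thesis
    using assms by (intro mult_left_mono_neg) (auto simp: mult_le_cancel_left intro: mult_nonpos_nonneg)
next
  case greater
  then show ?thesis
    using assms by (intro mult_left_mono) (auto simp: mult_le_cancel_left)
qed simp

lemma mult_le_abs_mult_bound:
  fixes l y b :: real
  assumes "0 \<le> y" "y \<le> b"
  shows "l * y \<le> \<bar>l\<bar> * b"
proof -
  have "l * y \<le> \<bar>l\<bar> * y"
    using assms by (intro mult_right_mono) auto
  also have "\<dots> \<le> \<bar>l\<bar> * b"
    using assms by (intro mult_left_mono) auto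
  finally show ?thesis .
qed

lemma exp_minus_square_le_scaled:
  fixes x q :: real and n :: nat
  assumes "0 \<le> q" "q \<le> 1"
  shows "exp (- 2 * x\<^sup>2 / n) \<le> exp (- 2 * (x * q)\<^sup>2 / n)"
proof -
  have "(x * q)\<^sup>2 \<le> x\<^sup>2"
    unfolding power_mult_distrib using assms by (intro mult_left_le power_le_one) auto
  then show ?thesis
    by (simp add: divide_right_mono)
qed

lemma (in finite_measure) integrable_exp_bounded:
  fixes g :: "'a \<Rightarrow> real" and B :: real
  assumes "g \<in> borel_measurable M" "\<And>x. x \<in> space M \<Longrightarrow> g x \<le> B"
  shows "integrable M (\<lambda>x. exp (g x))"
  using assms by (intro integrable_const_bound[where B = "exp B"] AE_I2) auto

lemma (in finite_measure) Chernoff_ineq_ge_space: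
  fixes f :: "'a \<Rightarrow> real"
  assumes "s > 0" "integrable M (\<lambda>x. exp (s * f x))"
  shows "measure M {x \<in> space M. f x \<ge> a} \<le> exp (- s * a) * (\<integral>x. exp (s * f x) \<partial>M)"
proof -
  have "set_integrable M (space M) (\<lambda>x. exp (s * f x))"
    unfolding set_integrable_def using assms(2) by (intro integrable_mult_indicator) auto
  from Chernoff_ineq_ge[OF assms(1) this sets.top] show ?thesis
    by (simp add: set_integral_space[OF assms(2)])
qed

lemma integrable_mult_bounded:
  fixes f g :: "'a \<Rightarrow> real"
  assumes "integrable M f" "g \<in> borel_measurable M" "\<And>x. x \<in> space M \<Longrightarrow> \<bar>g x\<bar> \<le> B"
  shows "integrable M (\<lambda>x. f x * g x)"
proof (rule Bochner_Integration.integrable_bound[of _ "\<lambda>x. B * f x"])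
  show "AE x in M. norm (f x * g x) \<le> norm (B * f x)"
  proof (rule AE_I2)
    fix x assume "x \<in> space M"
    with assms(3) have "\<bar>g x\<bar> \<le> B" .
    then have "0 \<le> B"
      by (rule order_trans[OF abs_ge_zero])
    from \<open>\<bar>g x\<bar> \<le> B\<close> have "\<bar>f x\<bar> * \<bar>g x\<bar> \<le> \<bar>f x\<bar> * B"
      by (simp add: mult_left_mono)
    with \<open>0 \<le> B\<close> show "norm (f x * g x) \<le> norm (B * f x)"
      by (simp add: abs_mult mult.commute)
  qed
qed (use assms in auto)

text \<open>Since the chord bound is affine in \<open>Y\<close>, only the conditional expectation of \<open>Y\<close>
  given \<open>F\<close> enters.\<close>

lemma (in sigma_finite_subalgebra) integral_mult_exp_le:
  fixes f Y :: "'a \<Rightarrow> real" and l b m :: real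
  assumes f: "integrable M f" "f \<in> borel_measurable F" "\<And>x. x \<in> space M \<Longrightarrow> 0 \<le> f x"
    and Y: "Y \<in> borel_measurable M" "\<And>x. x \<in> space M \<Longrightarrow> Y x \<in> {0..b}"
    and b: "b > 0" and m: "0 \<le> m" "m \<le> b"
    and cond: "AE x in M. l * real_cond_exp M F Y x \<le> l * m"
  shows "(\<integral>x. f x * exp (l * Y x) \<partial>M) \<le> exp (l * m + (l * b)\<^sup>2 / 8) * (\<integral>x. f x \<partial>M)"
proof -
  define c where "c = (exp (l * b) - 1) / b"
  have int_fY: "integrable M (\<lambda>x. f x * Y x)"
    using f Y by (intro integrable_mult_bounded[where B = b]) auto
  have "l * Y x \<le> \<bar>l\<bar> * b" if "x \<in> space M" for x
    using Y(2)[OF that] by (intro mult_le_abs_mult_bound) auto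
  then have int_fexp: "integrable M (\<lambda>x. f x * exp (l * Y x))"
    using f Y by (intro integrable_mult_bounded[where B = "exp (\<bar>l\<bar> * b)"]) auto
  have cond_exp: "AE x in M. f x * (c * real_cond_exp M F Y x) \<le> f x * (c * m)"
    using cond AE_space
  proof eventually_elim
    case (elim x)
    have "(exp (l * b) - 1) * real_cond_exp M F Y x / b \<le> (exp (l * b) - 1) * m / b"
      using b by (intro divide_right_mono exp_minus_one_mult_mono[OF elim(1)]) auto
    then have "c * real_cond_exp M F Y x \<le> c * m"
      by (simp add: c_def)
    then show ?case
      using f(3)[OF elim(2)] by (rule mult_left_mono)
  qed
  have "(\<integral>x. f x * exp (l * Y x) \<partial>M) \<le> (\<integral>x. f x + c * (f x * Y x) \<partial>M)"
  proof (rule integral_mono[OF int_fexp])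
    show "integrable M (\<lambda>x. f x + c * (f x * Y x))"
      using f int_fY by simp
    fix x assume "x \<in> space M"
    then show "f x * exp (l * Y x) \<le> f x + c * (f x * Y x)"
      using mult_left_mono[OF exp_le_chord[OF b, of "Y x" l] f(3)] Y(2)
      by (simp add: c_def algebra_simps)
  qed
  also have "\<dots> = (\<integral>x. f x \<partial>M) + c * (\<integral>x. f x * real_cond_exp M F Y x \<partial>M)"
    using f int_fY real_cond_exp_intg(2)[OF int_fY f(2) Y(1)] by simp
  also have "\<dots> = (\<integral>x. f x \<partial>M) + (\<integral>x. f x * (c * real_cond_exp M F Y x) \<partial>M)"
    by (simp add: mult.left_commute)
  also have "\<dots> \<le> (\<integral>x. f x \<partial>M) + (\<integral>x. f x * (c * m) \<partial>M)"
    using real_cond_exp_intg(1)[OF int_fY f(2) Y(1)] f cond_exp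
    by (intro add_left_mono integral_mono_AE) (auto simp: mult.left_commute)
  also have "\<dots> = (1 + c * m) * (\<integral>x. f x \<partial>M)"
    by (simp add: mult.commute distrib_left)
  also have "\<dots> \<le> exp (l * m + (l * b)\<^sup>2 / 8) * (\<integral>x. f x \<partial>M)"
  proof (intro mult_right_mono integral_nonneg_AE AE_I2)
    have "1 + c * m = 1 + m / b * (exp (l * b) - 1)" "l * b * (m / b) = l * m"
      using b by (simp_all add: c_def)
    then show "1 + c * m \<le> exp (l * m + (l * b)\<^sup>2 / 8)"
      using Hoeffdings_lemma_two_point[of "m / b" "l * b"] b m by simp
  qed (use f in auto)
  finally show ?thesis .
qed

locale bounded_random_sequence = prob_space +
  fixes X :: "nat \<Rightarrow> 'a \<Rightarrow> real" and n :: nat and b :: real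
  assumes measurable_X: "t \<in> {1..n} \<Longrightarrow> X t \<in> borel_measurable M"
    and X_in_range: "t \<in> {1..n} \<Longrightarrow> x \<in> space M \<Longrightarrow> X t x \<in> {0..b}"
begin

lemma AE_real_cond_exp_past_algebra_in_range:
  assumes t: "t \<in> {1..n}"
  shows "AE x in M. real_cond_exp M (past_algebra M X t) (X t) x \<in> {0..b}"
proof -
  interpret F: finite_measure_subalgebra M "past_algebra M X t"
    using measurable_X t by (intro finite_measure_subalgebra_past_algebra) auto
  have int: "integrable M (X t)"
    using measurable_X[OF t] X_in_range[OF t]
    by (intro integrable_const_bound[where B = b] AE_I2) auto
  have "AE x in M. 0 \<le> real_cond_exp M (past_algebra M X t) (X t) x"
    using X_in_range[OF t] by (intro F.real_cond_exp_ge_c[OF int] AE_I2) auto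
  moreover have "AE x in M. real_cond_exp M (past_algebra M X t) (X t) x \<le> b"
    using X_in_range[OF t] by (intro F.real_cond_exp_le_c[OF int] AE_I2) auto
  ultimately show ?thesis by eventually_elim auto
qed

lemma measurable_partial_sum [measurable]:
  "k \<le> n \<Longrightarrow> (\<lambda>x. \<Sum>t=1..k. X t x) \<in> borel_measurable M"
  using measurable_X by (intro borel_measurable_sum) auto

lemma integrable_exp_mult_partial_sum:
  assumes "k \<le> n"
  shows "integrable M (\<lambda>x. exp (l * (\<Sum>t=1..k. X t x)))"
proof (rule integrable_exp_bounded)
  show "(\<lambda>x. l * (\<Sum>t=1..k. X t x)) \<in> borel_measurable M"
    using measurable_partial_sum[OF assms] by measurable
  fix x assume x: "x \<in> space M"
  have "0 \<le> (\<Sum>t=1..k. X t x)"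
    by (rule sum_nonneg) (use X_in_range x assms in auto)
  moreover have "(\<Sum>t=1..k. X t x) \<le> card {1..k} * b"
    by (rule sum_bounded_above) (use X_in_range x assms in auto)
  ultimately show "l * (\<Sum>t=1..k. X t x) \<le> \<bar>l\<bar> * (card {1..k} * b)"
    by (rule mult_le_abs_mult_bound)
qed

lemma integral_exp_mult_partial_sum_le:
  fixes m :: real
  assumes b: "b > 0" and m: "0 \<le> m" "m \<le> b"
    and cond: "\<And>t. t \<in> {1..n} \<Longrightarrow>
                 AE x in M. l * real_cond_exp M (past_algebra M X t) (X t) x \<le> l * m"
  shows "k \<le> n \<Longrightarrow> (\<integral>x. exp (l * (\<Sum>t=1..k. X t x)) \<partial>M) \<le> exp (k * (l * m + (l * b)\<^sup>2 / 8))"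
proof (induction k)
  case 0
  then show ?case by (simp add: prob_space)
next
  case (Suc k)
  define F where "F = past_algebra M X (Suc k)"
  define f where "f = (\<lambda>x. exp (l * (\<Sum>t=1..k. X t x)))"
  interpret F: finite_measure_subalgebra M F
    unfolding F_def using Suc.prems measurable_X
    by (intro finite_measure_subalgebra_past_algebra) auto
  have "(\<lambda>x. \<Sum>t=1..k. X t x) \<in> borel_measurable F"
    unfolding F_def by (intro borel_measurable_sum measurable_past_algebra) auto
  then have f_meas: "f \<in> borel_measurable F"
    unfolding f_def by measurable
  have f_int: "integrable M f"
    unfolding f_def using Suc.prems by (intro integrable_exp_mult_partial_sum) simp
  have "(\<integral>x. exp (l * (\<Sum>t=1..Suc k. X t x)) \<partial>M) = (\<integral>x. f x * exp (l * X (Suc k) x) \<partial>M)"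
    by (simp add: f_def distrib_left exp_add)
  also have "\<dots> \<le> exp (l * m + (l * b)\<^sup>2 / 8) * (\<integral>x. f x \<partial>M)"
    using Suc.prems
    by (intro F.integral_mult_exp_le f_int f_meas b m measurable_X X_in_range)
      (auto simp: f_def F_def intro: cond)
  also have "\<dots> \<le> exp (l * m + (l * b)\<^sup>2 / 8) * exp (k * (l * m + (l * b)\<^sup>2 / 8))"
    using Suc by (simp add: f_def)
  also have "\<dots> = exp (Suc k * (l * m + (l * b)\<^sup>2 / 8))"
    by (simp add: exp_add[symmetric] algebra_simps)
  finally show ?case .
qed

lemma prob_partial_sum_ge_le:
  fixes m a :: real
  assumes b: "b > 0" and m: "0 \<le> m"
    and cond: "\<And>t. t \<in> {1..n} \<Longrightarrow> AE x in M. real_cond_exp M (past_algebra M X t) (X t) x \<le> m"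
    and a: "a \<ge> 0"
  shows "prob {x \<in> space M. (\<Sum>t=1..n. X t x) \<ge> n * m + a} \<le> exp (- 2 * (a / b)\<^sup>2 / n)"
proof (cases "a = 0 \<or> n = 0")
  case True
  then show ?thesis by auto
next
  case False
  define m' where "m' = min m b"
  define l where "l = 4 * a / (n * b\<^sup>2)"
  have m': "0 \<le> m'" "m' \<le> b"
    using m b by (auto simp: m'_def)
  have l: "l > 0"
    using False a b by (simp add: l_def)
  have cond': "AE x in M. l * real_cond_exp M (past_algebra M X t) (X t) x \<le> l * m'"
    if "t \<in> {1..n}" for t
    using cond[OF that] AE_real_cond_exp_past_algebra_in_range[OF that]
    by eventually_elim (use l in \<open>auto simp: m'_def\<close>)
  have "n * m' \<le> n * m"
    by (simp add: m'_def mult_left_mono)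
  moreover have "{x \<in> space M. (\<Sum>t=1..n. X t x) \<ge> n * m' + a} \<in> events"
    using measurable_partial_sum[of n] by measurable
  ultimately have "prob {x \<in> space M. (\<Sum>t=1..n. X t x) \<ge> n * m + a}
      \<le> prob {x \<in> space M. (\<Sum>t=1..n. X t x) \<ge> n * m' + a}"
    by (intro finite_measure_mono) auto
  also have "\<dots> \<le> exp (- l * (n * m' + a)) * (\<integral>x. exp (l * (\<Sum>t=1..n. X t x)) \<partial>M)"
    using l integrable_exp_mult_partial_sum[of n l] by (intro Chernoff_ineq_ge_space) auto
  also have "\<dots> \<le> exp (- l * (n * m' + a)) * exp (n * (l * m' + (l * b)\<^sup>2 / 8))"
    by (intro mult_left_mono integral_exp_mult_partial_sum_le[OF b m' cond']) auto
  also have "\<dots> = exp (- 2 * (a / b)\<^sup>2 / n)"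
    using False b by (simp add: l_def exp_add[symmetric] field_simps power2_eq_square)
  finally show ?thesis .
qed

lemma prob_partial_sum_le_le:
  fixes m a :: real
  assumes b: "b > 0" and m: "0 \<le> m" "m \<le> b"
    and cond: "\<And>t. t \<in> {1..n} \<Longrightarrow> AE x in M. m \<le> real_cond_exp M (past_algebra M X t) (X t) x"
    and a: "a \<ge> 0"
  shows "prob {x \<in> space M. (\<Sum>t=1..n. X t x) \<le> n * m - a} \<le> exp (- 2 * (a / b)\<^sup>2 / n)"
proof (cases "a = 0 \<or> n = 0")
  case True
  then show ?thesis by auto
next
  case False
  define s where "s = 4 * a / (n * b\<^sup>2)"
  have s: "s > 0"
    using False a b by (simp add: s_def)
  have "prob {x \<in> space M. (\<Sum>t=1..n. X t x) \<le> n * m - a}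
          \<le> exp (s * (n * m - a)) * (\<integral>x. exp (- s * (\<Sum>t=1..n. X t x)) \<partial>M)"
    using Chernoff_ineq_ge_space[OF s, of "\<lambda>x. - (\<Sum>t=1..n. X t x)" "a - n * m"]
      integrable_exp_mult_partial_sum[of n "- s"] by (simp add: le_minus_iff algebra_simps)
  also have "\<dots> \<le> exp (s * (n * m - a)) * exp (n * (- s * m + (- s * b)\<^sup>2 / 8))"
    using cond s
    by (intro mult_left_mono integral_exp_mult_partial_sum_le[OF b m]) (auto elim!: eventually_mono)
  also have "\<dots> = exp (- 2 * (a / b)\<^sup>2 / n)"
    using False b by (simp add: s_def exp_add[symmetric] field_simps power2_eq_square)
  finally show ?thesis .
qed

end

theorem lemma1:
  fixes M :: "'a measure" and X :: "nat \<Rightarrow> 'a \<Rightarrow> real"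
    and n :: nat and b \<mu> C a :: real
  assumes "prob_space M"
    and meas: "\<And>t. t \<in> {1..n} \<Longrightarrow> X t \<in> borel_measurable M"
    and range: "\<And>t x. t \<in> {1..n} \<Longrightarrow> x \<in> space M \<Longrightarrow> X t x \<in> {0..b}"
    and cond: "\<And>t. t \<in> {1..n} \<Longrightarrow>
                 AE x in M. \<bar>real_cond_exp M (past_algebra M X t) (X t) x - \<mu>\<bar> \<le> C"
    and "0 < C" and "C < \<mu>"
    and "a \<ge> 0"
  shows "measure M {x \<in> space M. (\<Sum>t=1..n. X t x) \<ge> n * (\<mu> + C) + a}
           \<le> exp (- 2 * (a * (\<mu> - C) / (b * (\<mu> + C)))^2 / n) \<and>
         measure M {x \<in> space M. (\<Sum>t=1..n. X t x) \<le> n * (\<mu> - C) - a}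
           \<le> exp (- 2 * (a / b)^2 / n)"
proof -
  interpret bounded_random_sequence M X n b
    using assms(1) meas range
    by (simp add: bounded_random_sequence_def bounded_random_sequence_axioms_def)
  show ?thesis
  proof (cases "n = 0")
    case True
    then show ?thesis by simp
  next
    case False
    let ?E = "\<lambda>t x. real_cond_exp M (past_algebra M X t) (X t) x"
    have cond_range: "AE x in M. ?E t x \<in> {0..b} \<and> \<mu> - C \<le> ?E t x \<and> ?E t x \<le> \<mu> + C"
      if "t \<in> {1..n}" for t
      using AE_real_cond_exp_past_algebra_in_range[OF that] cond[OF that]
      by eventually_elim (auto simp: abs_le_iff)
    have "1 \<in> {1..n}"
      using False by simp
    from cond_range[OF this] have "AE x in M. \<mu> - C \<le> b"
      by eventually_elim auto
    with \<open>C < \<mu>\<close> have "\<mu> - C \<le> b" "b > 0" by auto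
    have "prob {x \<in> space M. (\<Sum>t=1..n. X t x) \<ge> n * (\<mu> + C) + a} \<le> exp (- 2 * (a / b)\<^sup>2 / n)"
      using \<open>0 < C\<close> \<open>C < \<mu>\<close> \<open>b > 0\<close> \<open>a \<ge> 0\<close> cond_range
      by (intro prob_partial_sum_ge_le) (auto elim!: eventually_mono)
    moreover have "exp (- 2 * (a / b)\<^sup>2 / n) \<le> exp (- 2 * (a * (\<mu> - C) / (b * (\<mu> + C)))^2 / n)"
      using exp_minus_square_le_scaled[of "(\<mu> - C) / (\<mu> + C)" "a / b" n] \<open>0 < C\<close> \<open>C < \<mu>\<close>
      by simp
    moreover have "prob {x \<in> space M. (\<Sum>t=1..n. X t x) \<le> n * (\<mu> - C) - a}
                     \<le> exp (- 2 * (a / b)\<^sup>2 / n)"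
      using \<open>C < \<mu>\<close> \<open>\<mu> - C \<le> b\<close> \<open>b > 0\<close> \<open>a \<ge> 0\<close> cond_range
      by (intro prob_partial_sum_le_le) (auto elim!: eventually_mono)
    ultimately show ?thesis
      by (blast intro: order_trans)
  qed
qed
end
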